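(* Let $G$ be a directed multigraph on $[n+1]$ with edges $i\to j$ for $i<j$, and for $i=1,\ldots,n$ let $P_i=\mathcal{F}_G(e_i-e_{n+1})\subset\mathbb{R}^{E(G)}$. Let $G^\star$ be the graph on $\{0,1,\ldots,n+1\}$ obtained from $G$ by adding vertex $0$ and edges $(0,i)$, $i=1,\ldots,n$, and identify $\mathbb{R}^n\times\mathbb{R}^{E(G)}$ with $\mathbb{R}^{E(G^\star)}$ by letting the $i$-th coordinate of $\mathbb{R}^n$ correspond to the edge $(0,i)$. Then the Cayley embedding $\mathcal{C}(P_1,\ldots,P_n)$ equals the flow polytope $\mathcal{F}_{G^\star}(e_0-e_{n+1})$, i.e. the flow polytope of $G^\star$ with netflow $1$ at vertex $0$, $-1$ at vertex $n+1$ and $0$ elsewhere.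
   Context: $\mathcal{F}_H({\bf v})$ is the set of $f\in\mathbb{R}_{\ge0}^{E(H)}$ with outflow minus inflow at each vertex $k$ equal to $v_k$; $e_i-e_{n+1}$ is the netflow $1$ at vertex $i$, $-1$ at $n+1$, $0$ elsewhere. The Cayley embedding of polytopes $P_1,\ldots,P_n\subset\mathbb{R}^N$ is $\mathcal{C}(P_1,\ldots,P_n)=\mathrm{conv}\big(\bigcup_{i=1}^n \{{\sf e}_i\}\times P_i\big)\subset\mathbb{R}^n\times\mathbb{R}^N$, where ${\sf e}_1,\ldots,{\sf e}_n$ is the standard basis of $\mathbb{R}^n$. *)

theory Defs
  imports Complex_Main
begin

definition conv :: "('a \<Rightarrow> real) set \<Rightarrow> ('a \<Rightarrow> real) set" where
  "conv S = {x. \<exists>(k::nat) (c::nat \<Rightarrow> real) p.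
      (\<forall>j<k. 0 \<le> c j \<and> p j \<in> S) \<and> (\<Sum>j<k. c j) = 1 \<and>
      x = (\<lambda>z. \<Sum>j<k. c j * p j z)}"

definition flow_polytope ::
  "'e set \<Rightarrow> ('e \<Rightarrow> nat) \<Rightarrow> ('e \<Rightarrow> nat) \<Rightarrow> (nat \<Rightarrow> real) \<Rightarrow> ('e \<Rightarrow> real) set" where
  "flow_polytope E src tgt v = {f.
      (\<forall>e. e \<notin> E \<longrightarrow> f e = 0) \<and> (\<forall>e\<in>E. 0 \<le> f e) \<and>
      (\<forall>k. (\<Sum>e\<in>{e\<in>E. src e = k}. f e) - (\<Sum>e\<in>{e\<in>E. tgt e = k}. f e) = v k)}"

definition netflow :: "nat \<Rightarrow> nat \<Rightarrow> nat \<Rightarrow> real" where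
  "netflow a b = (\<lambda>k. (if k = a then 1 else 0) - (if k = b then 1 else 0))"

(* Cayley embedding C(P_1,...,P_n) in R^n x R^N, where a point (x,p) is encoded as the
   function on ('nat + 'c) sending Inl i to x_i and Inr c to p c. *)
definition cayley :: "nat \<Rightarrow> (nat \<Rightarrow> ('c \<Rightarrow> real) set) \<Rightarrow> (nat + 'c \<Rightarrow> real) set" where
  "cayley n P = conv (\<Union>i\<in>{1..n}.
      {(\<lambda>z. case z of Inl j \<Rightarrow> (if j = i then 1 else 0) | Inr c \<Rightarrow> p c) | p. p \<in> P i})"

(* G^star: add vertex 0 and edges Inl i = (0,i), i = 1..n; old edges are Inr e *)
definition star_edges :: "nat \<Rightarrow> 'e set \<Rightarrow> (nat + 'e) set" where
  "star_edges n E = Inl ` {1..n} \<union> Inr ` E"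

definition star_tl :: "('e \<Rightarrow> nat) \<Rightarrow> nat + 'e \<Rightarrow> nat" where
  "star_tl src z = (case z of Inl i \<Rightarrow> 0 | Inr e \<Rightarrow> src e)"

definition star_hd :: "('e \<Rightarrow> nat) \<Rightarrow> nat + 'e \<Rightarrow> nat" where
  "star_hd tgt z = (case z of Inl i \<Rightarrow> i | Inr e \<Rightarrow> tgt e)"

end

theory Submission
  imports Defs
begin

(* A point f of the flow polytope of G* is a pair (x, g): the weights x i = f (0, i) sum to 1,
   and g is a flow on G with netflow \<Sum>i x i (e i - e (n+1)).  Because every edge goes upwards,
   such a g decomposes as \<Sum>i x i p i with p i a unit flow from i to n + 1: normalising the flow
   leaving the lowest vertex a and continuing each of its edges by the decomposition of the
   remaining flow (which lives above a) gives p a.  Hence f = \<Sum>i x i (e i, p i) lies in the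
   Cayley embedding.  Conversely each (e i, p) is a flow on G*, and flow polytopes are convex. *)

definition net_outflow :: "'e set \<Rightarrow> ('e \<Rightarrow> nat) \<Rightarrow> ('e \<Rightarrow> nat) \<Rightarrow> ('e \<Rightarrow> real) \<Rightarrow> nat \<Rightarrow> real" where
  "net_outflow E src tgt f k = (\<Sum>e\<in>{e\<in>E. src e = k}. f e) - (\<Sum>e\<in>{e\<in>E. tgt e = k}. f e)"

lemma flow_polytope_iff:
  "f \<in> flow_polytope E src tgt v \<longleftrightarrow>
     (\<forall>e. e \<notin> E \<longrightarrow> f e = 0) \<and> (\<forall>e\<in>E. 0 \<le> f e) \<and> (\<forall>k. net_outflow E src tgt f k = v k)"
  by (simp add: flow_polytope_def net_outflow_def)

lemma net_outflow_add:
  "net_outflow E src tgt (\<lambda>e. f e + g e) k = net_outflow E src tgt f k + net_outflow E src tgt g k"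
  by (simp add: net_outflow_def sum.distrib)

lemma net_outflow_lincomb:
  "net_outflow E src tgt (\<lambda>e. \<Sum>j\<in>J. w j * F j e) k = (\<Sum>j\<in>J. w j * net_outflow E src tgt (F j) k)"
  unfolding net_outflow_def
  by (simp add: sum.swap[of _ J] sum_distrib_left right_diff_distrib sum_subtractf)

lemma net_outflow_indicator:
  assumes "finite E" "e\<^sub>0 \<in> E"
  shows "net_outflow E src tgt (\<lambda>e. if e = e\<^sub>0 then 1 else 0) k = netflow (src e\<^sub>0) (tgt e\<^sub>0) k"
  using assms by (auto simp: net_outflow_def netflow_def)

lemma netflow_trans: "netflow a b k + netflow b c k = netflow a c k"
  by (simp add: netflow_def)

lemma sum_netflow:
  assumes "finite I" "t \<notin> I"
  shows "(\<Sum>i\<in>I. s i * netflow i t k) = (if k \<in> I then s k else 0) - (if k = t then sum s I else 0)"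
  using assms by (simp add: netflow_def right_diff_distrib sum_subtractf if_distrib[of "(*) _"] sum.delta'
      cong: if_cong)

lemma flow_polytope_convex:
  assumes "finite J" "\<forall>j\<in>J. 0 \<le> w j" "sum w J = 1"
    and "\<forall>j\<in>J. 0 < w j \<longrightarrow> F j \<in> flow_polytope E src tgt v"
  shows "(\<lambda>e. \<Sum>j\<in>J. w j * F j e) \<in> flow_polytope E src tgt v"
  unfolding flow_polytope_iff
proof (intro conjI allI impI ballI)
  have F: "w j = 0 \<or> F j \<in> flow_polytope E src tgt v" if "j \<in> J" for j
    using assms(2,4) that by force
  show "(\<Sum>j\<in>J. w j * F j e) = 0" if "e \<notin> E" for e
    using F that by (intro sum.neutral) (auto simp: flow_polytope_iff)
  show "0 \<le> (\<Sum>j\<in>J. w j * F j e)" if "e \<in> E" for e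
    using F assms(2) that by (intro sum_nonneg) (force simp: flow_polytope_iff)
  fix k
  have "(\<Sum>j\<in>J. w j * net_outflow E src tgt (F j) k) = (\<Sum>j\<in>J. w j * v k)"
    using F by (intro sum.cong) (auto simp: flow_polytope_iff)
  then show "net_outflow E src tgt (\<lambda>e. \<Sum>j\<in>J. w j * F j e) k = v k"
    using assms(3) by (simp add: net_outflow_lincomb sum_distrib_right[symmetric])
qed

lemma zero_in_flow_polytope_netflow_self: "(\<lambda>_. 0) \<in> flow_polytope E src tgt (netflow t t)"
  by (simp add: flow_polytope_iff net_outflow_def netflow_def)

lemma flow_polytope_prepend_edge:
  assumes "finite E" "e\<^sub>0 \<in> E" "q \<in> flow_polytope E src tgt (netflow (tgt e\<^sub>0) t)"
  shows "(\<lambda>e. (if e = e\<^sub>0 then 1 else 0) + q e) \<in> flow_polytope E src tgt (netflow (src e\<^sub>0) t)"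
  using assms
  by (auto simp: flow_polytope_iff net_outflow_add net_outflow_indicator netflow_trans)

lemma flow_peel_lowest_vertex:
  assumes fin: "finite E" and edges: "\<forall>e\<in>E. src e < tgt e \<and> tgt e \<le> t" and "a < t"
    and g: "g \<in> flow_polytope E src tgt (\<lambda>k. \<Sum>i\<in>{a..<t}. s i * netflow i t k)"
    and low: "\<forall>e\<in>E. src e < a \<longrightarrow> g e = 0"
  defines "h \<equiv> \<lambda>k. \<Sum>e\<in>{e\<in>E. src e = a \<and> tgt e = k}. g e"
  shows "s a = (\<Sum>e\<in>{e\<in>E. src e = a}. g e)"
    and "(\<lambda>e. if src e = a then 0 else g e)
           \<in> flow_polytope E src tgt (\<lambda>k. \<Sum>i\<in>{Suc a..<t}. (s i + h i) * netflow i t k)"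
proof -
  let ?E\<^sub>a = "{e\<in>E. src e = a}"
  have netg: "net_outflow E src tgt g k
      = (if k \<in> {a..<t} then s k else 0) - (if k = t then sum s {a..<t} else 0)" for k
    using g by (simp add: flow_polytope_iff sum_netflow)
  have "(\<Sum>e\<in>{e\<in>E. tgt e = a}. g e) = 0"
    using low edges by (intro sum.neutral) auto
  then show sa: "s a = sum g ?E\<^sub>a"
    using netg[of a] \<open>a < t\<close> by (simp add: net_outflow_def)
  have h_outside: "h k = 0" if "k \<notin> {Suc a..t}" for k
    unfolding h_def using edges that by (intro sum.neutral) auto
  have "sum g ?E\<^sub>a = (\<Sum>k\<in>{Suc a..t}. \<Sum>e\<in>{e. e \<in> ?E\<^sub>a \<and> tgt e = k}. g e)"
    using fin edges by (intro sum.group[symmetric]) auto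
  then have "sum g ?E\<^sub>a = (\<Sum>k\<in>{Suc a..t}. h k)"
    by (simp add: h_def conj_assoc)
  then have s_split: "s a = (\<Sum>i\<in>{Suc a..<t}. h i) + h t"
    using sa \<open>a < t\<close> by (simp add: atLeastLessThanSuc_atLeastAtMost[symmetric])
  have net_out_a: "net_outflow E src tgt (\<lambda>e. if src e = a then g e else 0) k
      = (if k = a then s a else 0) - h k" for k
    using fin sa unfolding net_outflow_def h_def by (auto simp: sum.inter_filter[symmetric] intro: sum.cong)
  have g_split: "(\<lambda>e. (if src e = a then g e else 0) + (if src e = a then 0 else g e)) = g"
    by auto
  have "net_outflow E src tgt (\<lambda>e. if src e = a then 0 else g e) k
      = net_outflow E src tgt g k - net_outflow E src tgt (\<lambda>e. if src e = a then g e else 0) k" for k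
    using net_outflow_add[of E src tgt "\<lambda>e. if src e = a then g e else 0" "\<lambda>e. if src e = a then 0 else g e" k]
    unfolding g_split by simp
  also have "\<dots> k = (\<Sum>i\<in>{Suc a..<t}. (s i + h i) * netflow i t k)" for k
    using \<open>a < t\<close> h_outside[of k] h_outside[of a]
    by (auto simp: netg net_out_a sum_netflow sum.distrib s_split sum.atLeast_Suc_lessThan)
  finally show "(\<lambda>e. if src e = a then 0 else g e)
      \<in> flow_polytope E src tgt (\<lambda>k. \<Sum>i\<in>{Suc a..<t}. (s i + h i) * netflow i t k)"
    using g by (auto simp: flow_polytope_iff)
qed

lemma flow_decomposition_step:
  assumes fin: "finite E" and edges: "\<forall>e\<in>E. src e < tgt e \<and> tgt e \<le> t" and "a < t"
    and g: "g \<in> flow_polytope E src tgt (\<lambda>k. \<Sum>i\<in>{a..<t}. s i * netflow i t k)"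
    and low: "\<forall>e\<in>E. src e < a \<longrightarrow> g e = 0"
  defines "h \<equiv> \<lambda>k. \<Sum>e\<in>{e\<in>E. src e = a \<and> tgt e = k}. g e"
  assumes s_nonneg: "\<forall>i\<in>{a..<t}. 0 \<le> s i"
    and q: "\<forall>i\<in>{Suc a..<t}. 0 < s i + h i \<longrightarrow> q i \<in> flow_polytope E src tgt (netflow i t)"
    and g_rest: "(\<lambda>e. if src e = a then 0 else g e) = (\<lambda>e. \<Sum>i\<in>{Suc a..<t}. (s i + h i) * q i e)"
  shows "\<exists>p. (\<forall>i\<in>{a..<t}. 0 < s i \<longrightarrow> p i \<in> flow_polytope E src tgt (netflow i t)) \<and>
             g = (\<lambda>e. \<Sum>i\<in>{a..<t}. s i * p i e)"
proof -
  let ?E\<^sub>a = "{e\<in>E. src e = a}"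
  \<comment> \<open>an edge into the sink needs no continuation\<close>
  define q\<^sub>t where "q\<^sub>t = q(t := (\<lambda>_. 0))"
  define r where "r e' = (\<lambda>e. (if e = e' then 1 else 0) + q\<^sub>t (tgt e') e)" for e'
  define p where "p = q(a := (\<lambda>e. \<Sum>e'\<in>?E\<^sub>a. (g e' / s a) * r e' e))"
  have sa: "s a = sum g ?E\<^sub>a"
    using flow_peel_lowest_vertex(1)[OF fin edges \<open>a < t\<close> g low] .
  have g_nonneg: "\<forall>e\<in>E. 0 \<le> g e" and g_supp: "\<forall>e. e \<notin> E \<longrightarrow> g e = 0"
    using g by (auto simp: flow_polytope_iff)
  have r: "r e' \<in> flow_polytope E src tgt (netflow a t)" if e': "e' \<in> ?E\<^sub>a" "0 < g e'" for e'
  proof -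
    have "q\<^sub>t (tgt e') \<in> flow_polytope E src tgt (netflow (tgt e') t)"
    proof (cases "tgt e' = t")
      case False
      have "g e' \<le> h (tgt e')"
        unfolding h_def using fin e' g_nonneg by (intro member_le_sum) auto
      then have "0 < s (tgt e') + h (tgt e')"
        using e' edges s_nonneg False by (force intro: add_nonneg_pos)
      then show ?thesis
        using q e' edges False by (force simp: q\<^sub>t_def)
    qed (simp add: q\<^sub>t_def zero_in_flow_polytope_netflow_self)
    then show ?thesis
      unfolding r_def using flow_polytope_prepend_edge[OF fin] e' by force
  qed
  have p_flow: "p i \<in> flow_polytope E src tgt (netflow i t)" if "i \<in> {a..<t}" "0 < s i" for i
  proof (cases "i = a")
    case True
    have "(\<lambda>e. \<Sum>e'\<in>?E\<^sub>a. (g e' / s a) * r e' e) \<in> flow_polytope E src tgt (netflow a t)"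
      using fin g_nonneg r True that sa
      by (intro flow_polytope_convex) (auto simp: sum_divide_distrib[symmetric] zero_less_divide_iff)
    then show ?thesis using True by (simp add: p_def)
  next
    case False
    then show ?thesis
      using that q h_def g_nonneg by (force simp: p_def intro: add_pos_nonneg sum_nonneg)
  qed
  have "g e = (\<Sum>i\<in>{a..<t}. s i * p i e)" for e
  proof -
    have "s a * p a e = (\<Sum>e'\<in>?E\<^sub>a. g e' * r e' e)"
    proof (cases "s a = 0")
      case True
      then have "\<forall>e'\<in>?E\<^sub>a. g e' = 0"
        using sa fin g_nonneg sum_nonneg_eq_0_iff[of ?E\<^sub>a g] by auto
      then show ?thesis using True by simp
    qed (simp add: p_def sum_distrib_left)
    also have "\<dots> = (if src e = a then g e else 0) + (\<Sum>e'\<in>?E\<^sub>a. g e' * q\<^sub>t (tgt e') e)"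
      using fin g_supp by (auto simp: r_def distrib_left sum.distrib if_distrib[of "(*) _"] cong: if_cong)
    also have "(\<Sum>e'\<in>?E\<^sub>a. g e' * q\<^sub>t (tgt e') e)
        = (\<Sum>k\<in>{Suc a..t}. \<Sum>e'\<in>{e'. e' \<in> ?E\<^sub>a \<and> tgt e' = k}. g e' * q\<^sub>t (tgt e') e)"
      using fin edges by (intro sum.group[symmetric]) auto
    also have "\<dots> = (\<Sum>k\<in>{Suc a..t}. h k * q\<^sub>t k e)"
      unfolding h_def sum_distrib_right by (intro sum.cong) (auto simp: conj_assoc)
    also have "\<dots> = (\<Sum>k\<in>{Suc a..<t}. h k * q k e)"
      using \<open>a < t\<close> by (simp add: q\<^sub>t_def atLeastLessThanSuc_atLeastAtMost[symmetric])
    finally have "s a * p a e = (if src e = a then g e else 0) + (\<Sum>k\<in>{Suc a..<t}. h k * q k e)" .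
    moreover have "(if src e = a then 0 else g e) = (\<Sum>i\<in>{Suc a..<t}. s i * q i e) + (\<Sum>k\<in>{Suc a..<t}. h k * q k e)"
      using fun_cong[OF g_rest, of e] by (simp add: distrib_right sum.distrib)
    moreover have "(\<Sum>i\<in>{a..<t}. s i * p i e) = s a * p a e + (\<Sum>i\<in>{Suc a..<t}. s i * q i e)"
      using \<open>a < t\<close> by (simp add: sum.atLeast_Suc_lessThan p_def)
    ultimately show ?thesis by (cases "src e = a") simp_all
  qed
  then show ?thesis using p_flow by blast
qed

lemma flow_decomposition:
  assumes "finite E" "\<forall>e\<in>E. src e < tgt e \<and> tgt e \<le> t"
    and "g \<in> flow_polytope E src tgt (\<lambda>k. \<Sum>i\<in>{a..<t}. s i * netflow i t k)"
    and "\<forall>e\<in>E. src e < a \<longrightarrow> g e = 0" and "\<forall>i\<in>{a..<t}. 0 \<le> s i"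
  shows "\<exists>p. (\<forall>i\<in>{a..<t}. 0 < s i \<longrightarrow> p i \<in> flow_polytope E src tgt (netflow i t)) \<and>
             g = (\<lambda>e. \<Sum>i\<in>{a..<t}. s i * p i e)"
  using assms(3-)
proof (induction "t - a" arbitrary: a g s)
  case 0
  have "g e = 0" for e
  proof (cases "e \<in> E")
    case True
    then show ?thesis using 0 assms(2) by fastforce
  qed (use 0 in \<open>simp add: flow_polytope_iff\<close>)
  then show ?case using 0 by auto
next
  case (Suc m)
  then have "a < t" by simp
  define h where "h k = (\<Sum>e\<in>{e\<in>E. src e = a \<and> tgt e = k}. g e)" for k
  have "\<exists>q. (\<forall>i\<in>{Suc a..<t}. 0 < s i + h i \<longrightarrow> q i \<in> flow_polytope E src tgt (netflow i t)) \<and>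
          (\<lambda>e. if src e = a then 0 else g e) = (\<lambda>e. \<Sum>i\<in>{Suc a..<t}. (s i + h i) * q i e)"
  proof (rule Suc.hyps(1))
    show "(\<lambda>e. if src e = a then 0 else g e)
        \<in> flow_polytope E src tgt (\<lambda>k. \<Sum>i\<in>{Suc a..<t}. (s i + h i) * netflow i t k)"
      using flow_peel_lowest_vertex(2)[OF assms(1,2) \<open>a < t\<close> Suc.prems(1,2)] by (simp add: h_def)
    show "\<forall>i\<in>{Suc a..<t}. 0 \<le> s i + h i"
      using Suc.prems unfolding h_def by (auto intro!: add_nonneg_nonneg sum_nonneg simp: flow_polytope_iff)
  qed (use Suc in auto)
  then show ?case
    using flow_decomposition_step[OF assms(1,2) \<open>a < t\<close> Suc.prems] unfolding h_def by blast
qed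

lemma conv_subset_flow_polytope:
  assumes "S \<subseteq> flow_polytope E src tgt v"
  shows "conv S \<subseteq> flow_polytope E src tgt v"
  using assms by (auto simp: conv_def intro!: flow_polytope_convex)

lemma conv_finite_combination:
  fixes q :: "'i \<Rightarrow> 'a \<Rightarrow> real"
  assumes "finite I" "\<forall>i\<in>I. 0 \<le> w i" "sum w I = 1" "\<forall>i\<in>I. 0 < w i \<longrightarrow> q i \<in> S"
  shows "(\<lambda>z. \<Sum>i\<in>I. w i * q i z) \<in> conv S"
proof -
  let ?J = "{i\<in>I. 0 < w i}"
  obtain b where b: "bij_betw b {..<card ?J} ?J"
    using ex_bij_betw_nat_finite[of ?J] assms(1) by (auto simp: atLeast0LessThan)
  have drop_zero: "(\<Sum>i\<in>I. w i * X i) = (\<Sum>i\<in>?J. w i * X i)" for X :: "'i \<Rightarrow> real"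
    using assms(1,2) by (intro sum.mono_neutral_right) force+
  have reindex: "(\<Sum>j<card ?J. w (b j) * X (b j)) = (\<Sum>i\<in>?J. w i * X i)" for X :: "'i \<Rightarrow> real"
    by (rule sum.reindex_bij_betw[OF b])
  have "(\<lambda>z. \<Sum>i\<in>I. w i * q i z) = (\<lambda>z. \<Sum>j<card ?J. w (b j) * q (b j) z)"
  proof
    show "(\<Sum>i\<in>I. w i * q i z) = (\<Sum>j<card ?J. w (b j) * q (b j) z)" for z
      using drop_zero[of "\<lambda>i. q i z"] reindex[of "\<lambda>i. q i z"] by simp
  qed
  moreover have "(\<Sum>j<card ?J. w (b j)) = 1"
    using reindex[of "\<lambda>_. 1"] drop_zero[of "\<lambda>_. 1"] assms(3) by simp
  moreover have "\<forall>j<card ?J. 0 \<le> w (b j) \<and> q (b j) \<in> S"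
    using b assms(4) by (force simp: bij_betw_def)
  ultimately show ?thesis
    unfolding conv_def mem_Collect_eq by (intro exI[of _ "card ?J"] exI[of _ "w \<circ> b"] exI[of _ "q \<circ> b"]) simp
qed

definition cayley_point :: "nat \<Rightarrow> ('c \<Rightarrow> real) \<Rightarrow> nat + 'c \<Rightarrow> real" where
  "cayley_point i p = (\<lambda>z. case z of Inl j \<Rightarrow> if j = i then 1 else 0 | Inr c \<Rightarrow> p c)"

lemma cayley_eq_conv: "cayley n P = conv (\<Union>i\<in>{1..n}. cayley_point i ` P i)"
  by (simp add: cayley_def cayley_point_def Setcompr_eq_image)

lemma sum_filter_Plus:
  assumes "finite A" "finite B"
  shows "(\<Sum>z\<in>{z\<in>A <+> B. P z}. h z) = (\<Sum>a\<in>{a\<in>A. P (Inl a)}. h (Inl a)) + (\<Sum>b\<in>{b\<in>B. P (Inr b)}. h (Inr b))"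
proof -
  have "{z\<in>A <+> B. P z} = {a\<in>A. P (Inl a)} <+> {b\<in>B. P (Inr b)}" by auto
  then show ?thesis using assms by (simp add: sum.Plus)
qed

lemma net_outflow_star:
  assumes "finite E"
  shows "net_outflow (star_edges n E) (star_tl src) (star_hd tgt) f k =
    (if k = 0 then (\<Sum>i=1..n. f (Inl i)) else 0) - (if k \<in> {1..n} then f (Inl k) else 0)
      + net_outflow E src tgt (\<lambda>e. f (Inr e)) k"
proof -
  have "{i\<in>{1..n}. (0::nat) = k} = (if k = 0 then {1..n} else {})"
    and "{i\<in>{1..n}. i = k} = (if k \<in> {1..n} then {k} else {})" by auto
  then show ?thesis
    using assms unfolding net_outflow_def star_edges_def Plus_def[symmetric]
    by (simp add: sum_filter_Plus star_tl_def star_hd_def)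
qed

lemma cayley_point_in_star_flow:
  assumes "finite E" "i \<in> {1..n}" "p \<in> flow_polytope E src tgt (netflow i (n + 1))"
  shows "cayley_point i p \<in> flow_polytope (star_edges n E) (star_tl src) (star_hd tgt) (netflow 0 (n + 1))"
proof -
  have "(\<Sum>j=1..n. cayley_point i p (Inl j)) = 1"
    using assms(2) by (simp add: cayley_point_def)
  then have "net_outflow (star_edges n E) (star_tl src) (star_hd tgt) (cayley_point i p) k = netflow 0 (n + 1) k"
    for k
    using assms by (simp add: net_outflow_star flow_polytope_iff) (auto simp: cayley_point_def netflow_def)
  then show ?thesis
    using assms by (auto simp: flow_polytope_iff cayley_point_def star_edges_def split: sum.splits)
qed

lemma star_flow_in_cayley:
  assumes fin: "finite E" and edges: "\<forall>e\<in>E. 1 \<le> src e \<and> src e < tgt e \<and> tgt e \<le> n + 1"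
    and f: "f \<in> flow_polytope (star_edges n E) (star_tl src) (star_hd tgt) (netflow 0 (n + 1))"
  shows "f \<in> cayley n (\<lambda>i. flow_polytope E src tgt (netflow i (n + 1)))"
proof -
  define x where "x = (\<lambda>i. f (Inl i))"
  define g where "g = (\<lambda>e. f (Inr e))"
  have net_f: "(if k = 0 then sum x {1..n} else 0) - (if k \<in> {1..n} then x k else 0) + net_outflow E src tgt g k
      = netflow 0 (n + 1) k" for k
    using f unfolding flow_polytope_iff net_outflow_star[OF fin] x_def g_def by blast
  have "net_outflow E src tgt g 0 = 0"
    using edges unfolding net_outflow_def by (subst (1 2) sum.neutral) auto
  then have sum_x: "sum x {1..n} = 1"
    using net_f[of 0] by (simp add: netflow_def)
  have x_nonneg: "\<forall>i\<in>{1..<n+1}. 0 \<le> x i"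
    using f by (auto simp: flow_polytope_iff x_def star_edges_def)
  have "net_outflow E src tgt g k = (\<Sum>i\<in>{1..<n+1}. x i * netflow i (n + 1) k)" for k
    using net_f[of k] sum_x sum_netflow[of "{1..<n+1}" "n + 1" x k]
    by (cases "k = 0") (auto simp: netflow_def atLeastLessThanSuc_atLeastAtMost)
  then have g_flow: "g \<in> flow_polytope E src tgt (\<lambda>k. \<Sum>i\<in>{1..<n+1}. x i * netflow i (n + 1) k)"
    using f by (auto simp: flow_polytope_iff g_def star_edges_def)
  have "\<exists>p. (\<forall>i\<in>{1..<n+1}. 0 < x i \<longrightarrow> p i \<in> flow_polytope E src tgt (netflow i (n + 1))) \<and>
      g = (\<lambda>e. \<Sum>i\<in>{1..<n+1}. x i * p i e)"
    by (rule flow_decomposition[OF fin _ g_flow]) (use edges x_nonneg in auto)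
  then obtain p where p: "\<forall>i\<in>{1..n}. 0 < x i \<longrightarrow> p i \<in> flow_polytope E src tgt (netflow i (n + 1))"
    and g_eq: "g = (\<lambda>e. \<Sum>i\<in>{1..n}. x i * p i e)"
    by (auto simp: atLeastLessThanSuc_atLeastAtMost)
  have "f = (\<lambda>z. \<Sum>i\<in>{1..n}. x i * cayley_point i (p i) z)"
  proof
    fix z
    show "f z = (\<Sum>i\<in>{1..n}. x i * cayley_point i (p i) z)"
    proof (cases z)
      case (Inl j)
      have "Inl j \<notin> star_edges n E" if "j \<notin> {1..n}"
        using that by (auto simp: star_edges_def)
      then have "f (Inl j) = 0" if "j \<notin> {1..n}"
        using f that by (simp add: flow_polytope_iff)
      then show ?thesis
        using Inl by (auto simp: cayley_point_def x_def if_distrib[of "(*) _"] cong: if_cong)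
    qed (use fun_cong[OF g_eq] in \<open>simp add: cayley_point_def g_def\<close>)
  qed
  also have "\<dots> \<in> conv (\<Union>i\<in>{1..n}. cayley_point i ` flow_polytope E src tgt (netflow i (n + 1)))"
    using p x_nonneg sum_x by (intro conv_finite_combination) (auto simp: atLeastLessThanSuc_atLeastAtMost)
  finally show ?thesis
    by (simp add: cayley_eq_conv)
qed

theorem proposition7p2:
  fixes n :: nat and E :: "'e set" and src tgt :: "'e \<Rightarrow> nat"
  assumes "finite E"
    and "\<forall>e\<in>E. 1 \<le> src e \<and> src e < tgt e \<and> tgt e \<le> n + 1"
  shows "cayley n (\<lambda>i. flow_polytope E src tgt (netflow i (n + 1)))
       = flow_polytope (star_edges n E) (star_tl src) (star_hd tgt) (netflow 0 (n + 1))"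
proof
  show "cayley n (\<lambda>i. flow_polytope E src tgt (netflow i (n + 1)))
      \<subseteq> flow_polytope (star_edges n E) (star_tl src) (star_hd tgt) (netflow 0 (n + 1))"
    unfolding cayley_eq_conv using cayley_point_in_star_flow[OF assms(1)]
    by (intro conv_subset_flow_polytope) blast
  show "flow_polytope (star_edges n E) (star_tl src) (star_hd tgt) (netflow 0 (n + 1))
      \<subseteq> cayley n (\<lambda>i. flow_polytope E src tgt (netflow i (n + 1)))"
    using star_flow_in_cayley[OF assms] by blast
qed

end
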